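(* Let $(X,\leq)$ be a poset and $K$ a field. (1) If $FI(X,K)$ is Lie solvable, then ${\rm dl}_{Lie}(FI(X,K))={\rm dl}^{Lie}(FI(X,K))=\lceil \log_2(l(X)+1)\rceil+1$. (2) If $\mathcal{U}(FI(X,K))$ is solvable and $K\neq\mathbb{F}_2$, then ${\rm dl}(\mathcal{U}(FI(X,K)))=\lceil \log_2(l(X)+1)\rceil+1$.
   Context: $FI(X,K)$ is the finitary incidence algebra: the $K$-vector space of formal sums $\alpha=\sum_{x\leq y}\alpha_{xy}e_{xy}$ ($x,y\in X$, $\alpha_{xy}\in K$) such that for every pair $x<y$ only finitely many $x\leq u<v\leq y$ have $\alpha_{uv}\neq0$, with convolution product $\alpha\beta=\sum_{x\leq y}\big(\sum_{x\leq z\leq y}\alpha_{xz}\beta_{zy}\big)e_{xy}$; $\mathcal{U}(FI(X,K))$ is its group of units. For a unital associative algebra $A$ with $[x,y]=xy-yx$ (and $UV$, $[U,V]$ denoting spans of products, commutators of elements of subspaces $U,V$): $A^{[0]}=A$, $A^{[n+1]}=[A^{[n]},A^{[n]}]$; $A^{(0)}=A$, $A^{(n+1)}=[A^{(n)},A^{(n)}]A$. $A$ is Lie solvable if some $A^{[n]}=\{0\}$, and then ${\rm dl}_{Lie}(A)$ is the minimal such $n$; ${\rm dl}^{Lie}(A)$ is the minimal $n$ with $A^{(n)}=\{0\}$. For a solvable group $G$, ${\rm dl}(G)$ is its derived length (minimal $n$ with $G^{(n)}$ trivial, $G^{(n)}$ the derived series). $l(X)$ is the supremum of $|C|-1$ over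 finite chains $C\subseteq X$. $\mathbb{F}_2$ is the field with two elements; $\lceil t\rceil$ is the ceiling. *)

theory Defs
  imports Complex_Main "HOL-Algebra.Solvable_Groups" "HOL-Library.Extended_Nat"
begin

text \<open>The poset X is the ambient type 'a of class order; elements of the incidence
  algebra are functions alpha :: 'a => 'a => 'k with alpha x y the coefficient of e_xy.\<close>

definition FI :: "('a::order \<Rightarrow> 'a \<Rightarrow> 'k::field) set" where
  "FI = {\<alpha>. (\<forall>x y. \<not> x \<le> y \<longrightarrow> \<alpha> x y = 0) \<and>
            (\<forall>x y. x < y \<longrightarrow>
               finite {(u, v). x \<le> u \<and> u < v \<and> v \<le> y \<and> \<alpha> u v \<noteq> 0})}"

text \<open>Convolution product; for finitary series the sum has only finitely many nonzero terms.\<close>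
definition fi_mult :: "('a::order \<Rightarrow> 'a \<Rightarrow> 'k::field) \<Rightarrow> ('a \<Rightarrow> 'a \<Rightarrow> 'k) \<Rightarrow> ('a \<Rightarrow> 'a \<Rightarrow> 'k)" where
  "fi_mult \<alpha> \<beta> = (\<lambda>x y. if x \<le> y then
      (\<Sum>z \<in> {z. x \<le> z \<and> z \<le> y \<and> \<alpha> x z * \<beta> z y \<noteq> 0}. \<alpha> x z * \<beta> z y) else 0)"

definition fi_one :: "'a::order \<Rightarrow> 'a \<Rightarrow> 'k::field" where
  "fi_one = (\<lambda>x y. if x = y then 1 else 0)"

definition fi_zero :: "'a \<Rightarrow> 'a \<Rightarrow> 'k::field" where
  "fi_zero = (\<lambda>x y. 0)"

definition fi_comm :: "('a::order \<Rightarrow> 'a \<Rightarrow> 'k::field) \<Rightarrow> ('a \<Rightarrow> 'a \<Rightarrow> 'k) \<Rightarrow> ('a \<Rightarrow> 'a \<Rightarrow> 'k)" where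
  "fi_comm \<alpha> \<beta> = (\<lambda>x y. fi_mult \<alpha> \<beta> x y - fi_mult \<beta> \<alpha> x y)"

inductive_set fspan :: "('a \<Rightarrow> 'a \<Rightarrow> 'k::field) set \<Rightarrow> ('a \<Rightarrow> 'a \<Rightarrow> 'k) set"
  for S where
    zero: "fi_zero \<in> fspan S"
  | base: "s \<in> S \<Longrightarrow> s \<in> fspan S"
  | add: "a \<in> fspan S \<Longrightarrow> b \<in> fspan S \<Longrightarrow> (\<lambda>x y. a x y + b x y) \<in> fspan S"
  | smult: "a \<in> fspan S \<Longrightarrow> (\<lambda>x y. c * a x y) \<in> fspan S"

definition lie_br :: "('a::order \<Rightarrow> 'a \<Rightarrow> 'k::field) set \<Rightarrow> ('a \<Rightarrow> 'a \<Rightarrow> 'k) set \<Rightarrow> ('a \<Rightarrow> 'a \<Rightarrow> 'k) set" where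
  "lie_br U V = fspan {fi_comm u v | u v. u \<in> U \<and> v \<in> V}"

definition prod_sp :: "('a::order \<Rightarrow> 'a \<Rightarrow> 'k::field) set \<Rightarrow> ('a \<Rightarrow> 'a \<Rightarrow> 'k) set \<Rightarrow> ('a \<Rightarrow> 'a \<Rightarrow> 'k) set" where
  "prod_sp U V = fspan {fi_mult u v | u v. u \<in> U \<and> v \<in> V}"

fun lie_der :: "nat \<Rightarrow> ('a::order \<Rightarrow> 'a \<Rightarrow> 'k::field) set" where
  "lie_der 0 = FI"
| "lie_der (Suc n) = lie_br (lie_der n) (lie_der n)"

fun strong_lie_der :: "nat \<Rightarrow> ('a::order \<Rightarrow> 'a \<Rightarrow> 'k::field) set" where
  "strong_lie_der 0 = FI"
| "strong_lie_der (Suc n) = prod_sp (lie_br (strong_lie_der n) (strong_lie_der n)) FI"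

definition FI_lie_solvable :: "('a::order \<Rightarrow> 'a \<Rightarrow> 'k::field) itself \<Rightarrow> bool" where
  "FI_lie_solvable _ \<longleftrightarrow> (\<exists>n. (lie_der n :: ('a \<Rightarrow> 'a \<Rightarrow> 'k) set) = {fi_zero})"

definition dl_Lie :: "('a::order \<Rightarrow> 'a \<Rightarrow> 'k::field) itself \<Rightarrow> nat" where
  "dl_Lie _ = (LEAST n. (lie_der n :: ('a \<Rightarrow> 'a \<Rightarrow> 'k) set) = {fi_zero})"

definition dl_strong_Lie :: "('a::order \<Rightarrow> 'a \<Rightarrow> 'k::field) itself \<Rightarrow> nat" where
  "dl_strong_Lie _ = (LEAST n. (strong_lie_der n :: ('a \<Rightarrow> 'a \<Rightarrow> 'k) set) = {fi_zero})"

definition FI_monoid :: "('a::order \<Rightarrow> 'a \<Rightarrow> 'k::field) monoid" where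
  "FI_monoid = \<lparr>carrier = FI, mult = fi_mult, one = fi_one\<rparr>"

definition FI_units :: "('a::order \<Rightarrow> 'a \<Rightarrow> 'k::field) monoid" where
  "FI_units = units_of FI_monoid"

definition derived_length :: "('g, 'b) monoid_scheme \<Rightarrow> nat" where
  "derived_length G = (LEAST n. (derived G ^^ n) (carrier G) = {\<one>\<^bsub>G\<^esub>})"

definition poset_length :: "'a::order itself \<Rightarrow> enat" where
  "poset_length _ = Sup {enat (card C - 1) | C :: 'a set.
      finite C \<and> C \<noteq> {} \<and> (\<forall>x\<in>C. \<forall>y\<in>C. x \<le> y \<or> y \<le> x)}"

end

(* Write has_chain k x y if there is a chain x = z0 < z1 < ... < zk <= y.  The elements of
   FI(X,K) vanishing outside such pairs form an ideal I_k with I_k I_j <= I_(k+j), and every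
   commutator of FI(X,K) lies in I_1.  Hence the (n+1)-st terms of both Lie derived series lie
   in I_(2^n), and the (n+1)-st derived subgroup of the units consists of unitriangular
   elements of 1 + I_(2^n).  Conversely, cutting a chain of length 2^(n+1) from a to b in two
   halves at c writes e_ab = [e_ac, e_cb] and 1 + s e_ab = [1 + s e_ac, 1 + e_cb].  The base
   cases are e_ab = [e_aa, e_ab] and [diag(t at a), 1 + s e_ab] = 1 + (t - 1) s e_ab; the
   latter needs some t outside {0, 1}.
   So the (n+1)-st term is trivial iff l(X) < 2^n, and the least such n + 1 is
   ceil(log2(l(X) + 1)) + 1. *)

theory Submission
  imports Defs "HOL-Library.Log_Nat"
begin

section \<open>Chains and the length of a poset\<close>

fun has_chain :: "nat \<Rightarrow> 'a::order \<Rightarrow> 'a \<Rightarrow> bool" where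
  "has_chain 0 x y \<longleftrightarrow> x \<le> y"
| "has_chain (Suc k) x y \<longleftrightarrow> (\<exists>z. x < z \<and> has_chain k z y)"

lemma has_chain_imp_le: "has_chain k x y \<Longrightarrow> x \<le> y"
  by (induction k arbitrary: x) (auto intro: order.trans less_imp_le)

lemma has_chain_Suc_imp_less: "has_chain (Suc k) x y \<Longrightarrow> x < y"
  by (auto dest: has_chain_imp_le intro: order.strict_trans2)

lemma has_chain_pow2_imp_less: "has_chain (2 ^ k) x y \<Longrightarrow> x < y"
  by (metis has_chain_Suc_imp_less Suc_pred zero_less_power zero_less_numeral)

lemma has_chain_1: "has_chain 1 x y \<longleftrightarrow> x < y"
  by (auto intro: order.strict_trans2)

lemma has_chain_upper_mono: "has_chain k x z \<Longrightarrow> z \<le> y \<Longrightarrow> has_chain k x y"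
  by (induction k arbitrary: x) auto

lemma has_chain_add: "has_chain k x z \<Longrightarrow> has_chain j z y \<Longrightarrow> has_chain (k + j) x y"
proof (induction k arbitrary: x)
  case 0
  then show ?case
    by (cases j) (auto intro: order.trans order.strict_trans1)
qed auto

lemma has_chain_add_split:
  assumes "has_chain (k + j) x y"
  obtains z where "has_chain k x z" "has_chain j z y"
  using assms
proof (induction k arbitrary: x)
  case (Suc k)
  then obtain x' where "x < x'" "has_chain (k + j) x' y" by auto
  with Suc.IH[of x'] show ?case by (meson Suc.prems(1) has_chain.simps(2))
qed auto

lemma has_chain_shorter: "has_chain n x y \<Longrightarrow> k \<le> n \<Longrightarrow> has_chain k x y"
  by (metis has_chain_add_split has_chain_imp_le has_chain_upper_mono le_add_diff_inverse)

lemma has_chain_imp_chain: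
  "has_chain k x y \<Longrightarrow>
    \<exists>C. finite C \<and> card C = Suc k \<and> Complete_Partial_Order.chain (\<le>) C \<and> (\<forall>c\<in>C. x \<le> c)"
proof (induction k arbitrary: x)
  case 0
  then show ?case by (intro exI[of _ "{x}"]) (auto simp: Complete_Partial_Order.chain_def)
next
  case (Suc k)
  then obtain z where z: "x < z" "has_chain k z y" by auto
  with Suc.IH obtain C
    where C: "finite C" "card C = Suc k" "Complete_Partial_Order.chain (\<le>) C" "\<forall>c\<in>C. z \<le> c"
    by blast
  then have "x \<notin> C" using z(1) by auto
  with C z show ?case
    by (intro exI[of _ "insert x C"])
      (auto simp: Complete_Partial_Order.chain_def intro: order.trans less_imp_le)
qed

lemma chain_imp_has_chain:
  "finite C \<Longrightarrow> Complete_Partial_Order.chain (\<le>) C \<Longrightarrow> card C = Suc k \<Longrightarrow> \<exists>x\<in>C. \<exists>y. has_chain k x y"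
proof (induction k arbitrary: C)
  case 0
  then show ?case by (auto simp: card_Suc_eq)
next
  case (Suc k)
  then have "C \<noteq> {}" by auto
  then obtain a where a: "a \<in> C" "\<forall>c\<in>C. a \<le> c"
    using Suc.prems finite_has_minimal[of C] unfolding Complete_Partial_Order.chain_def by metis
  have "finite (C - {a})" "Complete_Partial_Order.chain (\<le>) (C - {a})" "card (C - {a}) = Suc k"
    using Suc.prems a by (auto simp: Complete_Partial_Order.chain_def)
  then obtain x y where "x \<in> C - {a}" "has_chain k x y" using Suc.IH by blast
  moreover from a \<open>x \<in> C - {a}\<close> have "a < x" by (auto simp: order.order_iff_strict)
  ultimately show ?case using a(1) by auto
qed

lemma poset_length_less_iff:
  "poset_length TYPE('a::order) < enat k \<longleftrightarrow> (\<forall>x y::'a. \<not> has_chain k x y)"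
proof
  assume less: "poset_length TYPE('a) < enat k"
  show "\<forall>x y::'a. \<not> has_chain k x y"
  proof (intro allI notI)
    fix x y :: 'a
    assume "has_chain k x y"
    then obtain C :: "'a set" where "finite C" "card C = Suc k" "Complete_Partial_Order.chain (\<le>) C"
      using has_chain_imp_chain by blast
    then have "enat k \<le> poset_length TYPE('a)"
      unfolding poset_length_def Complete_Partial_Order.chain_def by (intro Sup_upper) force
    with less show False by simp
  qed
next
  assume no_chain: "\<forall>x y::'a. \<not> has_chain k x y"
  then obtain k' where k: "k = Suc k'" by (cases k) auto
  have "poset_length TYPE('a) \<le> enat k'"
    unfolding poset_length_def
  proof (rule Sup_least, clarify)
    fix C :: "'a set"
    assume C: "finite C" "C \<noteq> {}" "\<forall>x\<in>C. \<forall>y\<in>C. x \<le> y \<or> y \<le> x"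
    then have "card C = Suc (card C - 1)" by (simp add: card_gt_0_iff)
    with C obtain x y :: 'a where "has_chain (card C - 1) x y"
      using chain_imp_has_chain unfolding Complete_Partial_Order.chain_def by metis
    with no_chain k have "card C - 1 \<le> k'" by (meson has_chain_shorter not_less_eq_eq)
    then show "enat (card C - 1) \<le> enat k'" by simp
  qed
  with k show "poset_length TYPE('a) < enat k" by (simp add: le_less_trans)
qed

lemma ceiling_log2_Suc: "\<lceil>log 2 (real m + 1)\<rceil> = int (ceillog2 (Suc m))"
proof -
  have "0 \<le> log 2 (real m + 1)" by simp
  then have "\<lceil>log 2 (real m + 1)\<rceil> \<ge> 0" by linarith
  then show ?thesis by (simp add: ceillog2_def add.commute)
qed

lemma Least_eq_Suc_ceillog2:
  assumes "\<not> P 0" and "\<And>n. P (Suc n) \<longleftrightarrow> m < 2 ^ n"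
  shows "(LEAST n. P n) = Suc (ceillog2 (Suc m))"
proof (rule Least_equality)
  show "P (Suc (ceillog2 (Suc m)))"
    using assms(2) le_two_power_ceillog2[of "Suc m"] by simp
next
  fix n
  assume "P n"
  with assms show "Suc (ceillog2 (Suc m)) \<le> n"
    using ceillog2_le_iff[of "Suc m"] by (cases n) auto
qed

section \<open>The finitary incidence algebra\<close>

definition triangular :: "('a::order \<Rightarrow> 'a \<Rightarrow> 'k::zero) \<Rightarrow> bool" where
  "triangular f \<longleftrightarrow> (\<forall>a b. f a b \<noteq> 0 \<longrightarrow> a \<le> b)"

lemma FI_imp_triangular: "f \<in> FI \<Longrightarrow> triangular f"
  unfolding FI_def triangular_def by blast

lemma triangular_fi_mult: "triangular (fi_mult f g)"
  unfolding triangular_def fi_mult_def by auto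

lemma fi_mult_eq_sum:
  assumes "triangular f" "triangular g" "finite T"
    and "\<And>z. u \<le> z \<Longrightarrow> z \<le> v \<Longrightarrow> f u z * g z v \<noteq> 0 \<Longrightarrow> z \<in> T"
  shows "fi_mult f g u v = (\<Sum>z\<in>T. f u z * g z v)"
proof -
  have nonzero: "{z. u \<le> z \<and> z \<le> v \<and> f u z * g z v \<noteq> 0} = T - {z. f u z * g z v = 0}"
    using assms(1,2,4) unfolding triangular_def by fastforce
  have "(\<Sum>z\<in>T. f u z * g z v) = (\<Sum>z\<in>T - {z. f u z * g z v = 0}. f u z * g z v)"
    using sum.setdiff_irrelevant[OF assms(3), of "\<lambda>z. f u z * g z v"] by simp
  also have "\<dots> = fi_mult f g u v"
  proof (cases "u \<le> v")
    case True
    then have "fi_mult f g u v = (\<Sum>z\<in>{z. u \<le> z \<and> z \<le> v \<and> f u z * g z v \<noteq> 0}. f u z * g z v)"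
      by (simp add: fi_mult_def)
    then show ?thesis unfolding nonzero by (rule sym)
  next
    case False
    then have "T - {z. f u z * g z v = 0} = {}"
      using nonzero by (auto intro: order.trans)
    with False show ?thesis by (simp only: sum.empty) (simp add: fi_mult_def)
  qed
  finally show ?thesis ..
qed

lemma fi_mult_nonzeroE:
  assumes "fi_mult f g u v \<noteq> 0"
  obtains z where "u \<le> z" "z \<le> v" "f u z \<noteq> 0" "g z v \<noteq> 0"
proof -
  from assms have "{z. u \<le> z \<and> z \<le> v \<and> f u z * g z v \<noteq> 0} \<noteq> {}"
    unfolding fi_mult_def by (metis sum.empty)
  with that show ?thesis by auto
qed

lemma fi_mult_diag: "triangular f \<Longrightarrow> triangular g \<Longrightarrow> fi_mult f g a a = f a a * g a a"
  using fi_mult_eq_sum[of f g "{a}" a a] by (simp add: order.antisym)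

lemma FI_finite_support:
  assumes "f \<in> FI"
  shows "finite {(p, q). u \<le> p \<and> p < q \<and> q \<le> v \<and> f p q \<noteq> 0}"
proof (cases "u < v")
  case True
  with assms show ?thesis unfolding FI_def by blast
next
  case False
  then have "{(p, q). u \<le> p \<and> p < q \<and> q \<le> v \<and> f p q \<noteq> 0} = {}"
    by (auto dest: order.strict_trans1 order.strict_trans2)
  then show ?thesis by (simp only: finite.emptyI)
qed

lemma FI_finite_row:
  assumes "f \<in> FI"
  shows "finite {z. u \<le> z \<and> z \<le> v \<and> f u z \<noteq> 0}"
proof (rule finite_subset)
  show "{z. u \<le> z \<and> z \<le> v \<and> f u z \<noteq> 0} \<subseteq>
      insert u (snd ` {(p, q). u \<le> p \<and> p < q \<and> q \<le> v \<and> f p q \<noteq> 0})"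
    by (force simp: order.order_iff_strict)
qed (simp add: FI_finite_support[OF assms])

lemma FI_finite_col:
  assumes "f \<in> FI"
  shows "finite {z. u \<le> z \<and> z \<le> v \<and> f z v \<noteq> 0}"
proof (rule finite_subset)
  show "{z. u \<le> z \<and> z \<le> v \<and> f z v \<noteq> 0} \<subseteq>
      insert v (fst ` {(p, q). u \<le> p \<and> p < q \<and> q \<le> v \<and> f p q \<noteq> 0})"
    by (force simp: order.order_iff_strict)
qed (simp add: FI_finite_support[OF assms])

lemma FI_fi_mult:
  assumes f: "f \<in> FI" and g: "g \<in> FI"
  shows "fi_mult f g \<in> FI"
proof -
  have "finite {(p, q). x \<le> p \<and> p < q \<and> q \<le> y \<and> fi_mult f g p q \<noteq> 0}" for x y
  proof -
    let ?Sf = "{(p, q). x \<le> p \<and> p < q \<and> q \<le> y \<and> f p q \<noteq> 0}"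
    let ?Sg = "{(p, q). x \<le> p \<and> p < q \<and> q \<le> y \<and> g p q \<noteq> 0}"
    have "{(p, q). x \<le> p \<and> p < q \<and> q \<le> y \<and> fi_mult f g p q \<noteq> 0}
        \<subseteq> ?Sf \<union> ?Sg \<union> (\<lambda>((p, _), (_, q)). (p, q)) ` (?Sf \<times> ?Sg)"
    proof
      fix r
      assume "r \<in> {(p, q). x \<le> p \<and> p < q \<and> q \<le> y \<and> fi_mult f g p q \<noteq> 0}"
      then obtain p q where r: "r = (p, q)" and pq: "x \<le> p" "p < q" "q \<le> y" "fi_mult f g p q \<noteq> 0"
        by auto
      show "r \<in> ?Sf \<union> ?Sg \<union> (\<lambda>((p, _), (_, q)). (p, q)) ` (?Sf \<times> ?Sg)"
      proof (cases "(p, q) \<in> ?Sf \<union> ?Sg")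
        case False
        obtain z where z: "p \<le> z" "z \<le> q" "f p z \<noteq> 0" "g z q \<noteq> 0"
          using pq(4) by (rule fi_mult_nonzeroE)
        with False pq have "z \<noteq> p" "z \<noteq> q" by auto
        with pq z have "((p, z), (z, q)) \<in> ?Sf \<times> ?Sg"
          by (auto simp: order.order_iff_strict intro: order.trans)
        then show ?thesis unfolding r by force
      qed (simp add: r)
    qed
    moreover have "finite (?Sf \<union> ?Sg \<union> (\<lambda>((p, _), (_, q)). (p, q)) ` (?Sf \<times> ?Sg))"
      using FI_finite_support[OF f] FI_finite_support[OF g] by simp
    ultimately show ?thesis by (rule finite_subset)
  qed
  then show ?thesis unfolding FI_def fi_mult_def by auto
qed

lemma fi_mult_assoc:
  assumes f: "f \<in> FI" and g: "g \<in> FI" and h: "h \<in> FI"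
  shows "fi_mult (fi_mult f g) h = fi_mult f (fi_mult g h)"
proof (intro ext)
  fix u v
  have tri: "triangular f" "triangular g" "triangular h"
    using f g h by (auto intro: FI_imp_triangular)
  define A where "A = {z. u \<le> z \<and> z \<le> v \<and> f u z \<noteq> 0}"
  define B where "B = {z. u \<le> z \<and> z \<le> v \<and> h z v \<noteq> 0}"
  have fin: "finite A" "finite B"
    unfolding A_def B_def using FI_finite_row[OF f] FI_finite_col[OF h] .
  have "fi_mult (fi_mult f g) h u v = (\<Sum>w\<in>B. fi_mult f g u w * h w v)"
    by (rule fi_mult_eq_sum) (use tri fin in \<open>auto simp: B_def triangular_fi_mult\<close>)
  also have "\<dots> = (\<Sum>w\<in>B. (\<Sum>z\<in>A. f u z * g z w) * h w v)"
  proof (rule sum.cong[OF refl])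
    fix w
    assume "w \<in> B"
    have "fi_mult f g u w = (\<Sum>z\<in>A. f u z * g z w)"
      by (rule fi_mult_eq_sum) (use tri fin \<open>w \<in> B\<close> in \<open>auto simp: A_def B_def intro: order.trans\<close>)
    then show "fi_mult f g u w * h w v = (\<Sum>z\<in>A. f u z * g z w) * h w v" by simp
  qed
  also have "\<dots> = (\<Sum>z\<in>A. f u z * (\<Sum>w\<in>B. g z w * h w v))"
    by (simp add: sum_distrib_left sum_distrib_right mult.assoc sum.swap[of _ B])
  also have "\<dots> = (\<Sum>z\<in>A. f u z * fi_mult g h z v)"
  proof (rule sum.cong[OF refl])
    fix z
    assume "z \<in> A"
    have "fi_mult g h z v = (\<Sum>w\<in>B. g z w * h w v)"
      by (rule fi_mult_eq_sum) (use tri fin \<open>z \<in> A\<close> in \<open>auto simp: A_def B_def intro: order.trans\<close>)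
    then show "f u z * (\<Sum>w\<in>B. g z w * h w v) = f u z * fi_mult g h z v" by simp
  qed
  also have "\<dots> = fi_mult f (fi_mult g h) u v"
    by (rule fi_mult_eq_sum[symmetric]) (use tri fin in \<open>auto simp: A_def triangular_fi_mult\<close>)
  finally show "fi_mult (fi_mult f g) h u v = fi_mult f (fi_mult g h) u v" .
qed

lemma FI_fi_one: "fi_one \<in> FI"
  unfolding FI_def fi_one_def by auto

lemma triangular_fi_one: "triangular fi_one"
  unfolding triangular_def fi_one_def by auto

lemma fi_mult_one_left:
  assumes "triangular f"
  shows "fi_mult fi_one f = f"
proof (intro ext)
  fix u v
  have "fi_mult fi_one f u v = (\<Sum>z\<in>{u}. fi_one u z * f z v)"
    by (rule fi_mult_eq_sum[OF triangular_fi_one assms]) (auto simp: fi_one_def split: if_splits)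
  then show "fi_mult fi_one f u v = f u v" by (simp add: fi_one_def)
qed

lemma fi_mult_one_right:
  assumes "triangular f"
  shows "fi_mult f fi_one = f"
proof (intro ext)
  fix u v
  have "fi_mult f fi_one u v = (\<Sum>z\<in>{v}. f u z * fi_one z v)"
    by (rule fi_mult_eq_sum[OF assms triangular_fi_one]) (auto simp: fi_one_def split: if_splits)
  then show "fi_mult f fi_one u v = f u v" by (simp add: fi_one_def)
qed

lemma fi_one_neq_zero: "fi_one \<noteq> fi_zero"
  by (metis fi_one_def fi_zero_def one_neq_zero)

lemma monoid_FI_monoid: "monoid FI_monoid"
  by unfold_locales (auto simp: FI_monoid_def FI_fi_mult fi_mult_assoc FI_fi_one
      fi_mult_one_left fi_mult_one_right FI_imp_triangular)

interpretation FI_units: group "FI_units :: ('a::order \<Rightarrow> 'a \<Rightarrow> 'k::field) monoid"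
  unfolding FI_units_def by (rule monoid.units_group[OF monoid_FI_monoid])

lemma FI_units_carrier:
  "h \<in> carrier FI_units \<longleftrightarrow> h \<in> FI \<and> (\<exists>g\<in>FI. fi_mult g h = fi_one \<and> fi_mult h g = fi_one)"
  by (simp add: FI_units_def units_of_def Units_def FI_monoid_def)

lemma FI_units_mult [simp]: "x \<otimes>\<^bsub>FI_units\<^esub> y = fi_mult x y"
  by (simp add: FI_units_def units_of_def FI_monoid_def)

lemma FI_units_one [simp]: "\<one>\<^bsub>FI_units\<^esub> = fi_one"
  by (simp add: FI_units_def units_of_def FI_monoid_def)

lemma FI_units_FI: "h \<in> carrier FI_units \<Longrightarrow> h \<in> FI"
  by (simp add: FI_units_carrier)

lemma FI_units_triangular: "h \<in> carrier FI_units \<Longrightarrow> triangular h"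
  by (simp add: FI_units_carrier FI_imp_triangular)

lemma FI_units_diag_nonzero:
  assumes "h \<in> carrier FI_units"
  shows "h a a \<noteq> 0"
proof
  assume "h a a = 0"
  from assms obtain g where "g \<in> FI" "fi_mult g h = fi_one"
    by (auto simp: FI_units_carrier)
  with assms have "g a a * h a a = 1"
    by (metis FI_imp_triangular FI_units_triangular fi_mult_diag fi_one_def)
  with \<open>h a a = 0\<close> show False by simp
qed

section \<open>The Lie derived series\<close>

definition chain_ideal :: "nat \<Rightarrow> ('a::order \<Rightarrow> 'a \<Rightarrow> 'k::field) set" where
  "chain_ideal k = {f. \<forall>a b. \<not> has_chain k a b \<longrightarrow> f a b = 0}"

lemma chain_ideal_0: "f \<in> chain_ideal 0 \<longleftrightarrow> triangular f"
  by (auto simp: chain_ideal_def triangular_def)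

lemma FI_subset_chain_ideal_0: "FI \<subseteq> chain_ideal 0"
  using FI_imp_triangular chain_ideal_0 by blast

lemma chain_ideal_trivial:
  assumes "\<And>a b::'a. \<not> has_chain k a b"
  shows "(chain_ideal k :: ('a::order \<Rightarrow> 'a \<Rightarrow> 'k::field) set) = {fi_zero}"
  using assms by (auto simp: chain_ideal_def fi_zero_def intro!: ext)

lemma fspan_subset_chain_ideal:
  assumes "S \<subseteq> chain_ideal k"
  shows "fspan S \<subseteq> chain_ideal k"
proof
  fix f
  assume "f \<in> fspan S"
  then show "f \<in> chain_ideal k"
    by (induction rule: fspan.induct) (use assms in \<open>auto simp: chain_ideal_def fi_zero_def\<close>)
qed

lemma fspan_mono:
  assumes "S \<subseteq> T"
  shows "fspan S \<subseteq> fspan T"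
proof
  fix f
  assume "f \<in> fspan S"
  then show "f \<in> fspan T"
    by (induction rule: fspan.induct) (use assms in \<open>auto intro: fspan.intros\<close>)
qed

lemma fi_mult_chain_ideal:
  assumes "f \<in> chain_ideal k" "g \<in> chain_ideal j"
  shows "fi_mult f g \<in> chain_ideal (k + j)"
proof -
  have "has_chain (k + j) a b" if "fi_mult f g a b \<noteq> 0" for a b
  proof -
    from that obtain z where "f a z \<noteq> 0" "g z b \<noteq> 0"
      by (rule fi_mult_nonzeroE)
    with assms show ?thesis
      unfolding chain_ideal_def by (blast intro: has_chain_add)
  qed
  then show ?thesis unfolding chain_ideal_def by blast
qed

lemma fi_comm_chain_ideal:
  assumes "f \<in> chain_ideal k" "g \<in> chain_ideal j"
  shows "fi_comm f g \<in> chain_ideal (k + j)"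
proof -
  have "fi_mult f g \<in> chain_ideal (k + j)" "fi_mult g f \<in> chain_ideal (k + j)"
    using fi_mult_chain_ideal[OF assms] fi_mult_chain_ideal[OF assms(2,1)]
    by (simp_all add: add.commute)
  then show ?thesis by (auto simp: chain_ideal_def fi_comm_def)
qed

lemma fi_comm_triangular:
  assumes "triangular f" "triangular g"
  shows "fi_comm f g \<in> chain_ideal 1"
proof -
  have "fi_comm f g a b = 0" if "\<not> a < b" for a b
  proof (cases "a = b")
    case True
    with assms show ?thesis by (simp add: fi_comm_def fi_mult_diag)
  next
    case False
    with that show ?thesis by (simp add: fi_comm_def fi_mult_def)
  qed
  then show ?thesis unfolding chain_ideal_def has_chain_1 by blast
qed

lemma fi_comm_in_lie_br: "u \<in> U \<Longrightarrow> v \<in> V \<Longrightarrow> fi_comm u v \<in> lie_br U V"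
  unfolding lie_br_def by (blast intro: fspan.base)

lemma lie_br_mono: "U \<subseteq> U' \<Longrightarrow> V \<subseteq> V' \<Longrightarrow> lie_br U V \<subseteq> lie_br U' V'"
  unfolding lie_br_def by (rule fspan_mono) blast

lemma lie_br_chain_ideal:
  "U \<subseteq> chain_ideal k \<Longrightarrow> V \<subseteq> chain_ideal j \<Longrightarrow> lie_br U V \<subseteq> chain_ideal (k + j)"
  unfolding lie_br_def by (rule fspan_subset_chain_ideal) (auto intro: fi_comm_chain_ideal)

lemma lie_br_FI: "lie_br FI FI \<subseteq> chain_ideal 1"
  unfolding lie_br_def
  by (rule fspan_subset_chain_ideal) (blast intro: fi_comm_triangular FI_imp_triangular)

lemma prod_sp_chain_ideal:
  "U \<subseteq> chain_ideal k \<Longrightarrow> V \<subseteq> chain_ideal j \<Longrightarrow> prod_sp U V \<subseteq> chain_ideal (k + j)"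
  unfolding prod_sp_def by (rule fspan_subset_chain_ideal) (auto intro: fi_mult_chain_ideal)

lemma lie_der_Suc_subset: "lie_der (Suc n) \<subseteq> chain_ideal (2 ^ n)"
proof (induction n)
  case 0
  show ?case using lie_br_FI by simp
next
  case (Suc n)
  then show ?case using lie_br_chain_ideal[OF Suc.IH Suc.IH] by (simp add: mult_2)
qed

lemma strong_lie_der_Suc_subset: "strong_lie_der (Suc n) \<subseteq> chain_ideal (2 ^ n)"
proof (induction n)
  case 0
  show ?case using prod_sp_chain_ideal[OF lie_br_FI FI_subset_chain_ideal_0] by simp
next
  case (Suc n)
  show ?case
    using prod_sp_chain_ideal[OF lie_br_chain_ideal[OF Suc.IH Suc.IH] FI_subset_chain_ideal_0]
    by (simp add: mult_2)
qed

lemma lie_br_subset_prod_sp: "lie_br U V \<subseteq> prod_sp (lie_br U V) FI"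
proof
  fix f
  assume f: "f \<in> lie_br U V"
  have "lie_br U V \<subseteq> chain_ideal 0"
    unfolding lie_br_def
    by (rule fspan_subset_chain_ideal)
      (auto simp: chain_ideal_0 fi_comm_def triangular_def fi_mult_def)
  with f have "f = fi_mult f fi_one"
    by (auto simp: chain_ideal_0 fi_mult_one_right)
  with f show "f \<in> prod_sp (lie_br U V) FI"
    unfolding prod_sp_def using FI_fi_one by (blast intro: fspan.base)
qed

lemma lie_der_subset_strong_lie_der: "lie_der n \<subseteq> strong_lie_der n"
proof (induction n)
  case (Suc n)
  show ?case
    using lie_br_mono[OF Suc.IH Suc.IH]
      lie_br_subset_prod_sp[of "strong_lie_der n" "strong_lie_der n"]
    by auto
qed simp

definition matrix_unit :: "'a::order \<Rightarrow> 'a \<Rightarrow> 'a \<Rightarrow> 'a \<Rightarrow> 'k::field" where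
  "matrix_unit a b = (\<lambda>u v. if u = a \<and> v = b then 1 else 0)"

lemma matrix_unit_FI: "a \<le> b \<Longrightarrow> matrix_unit a b \<in> FI"
proof -
  assume "a \<le> b"
  moreover have "finite {(p, q). x \<le> p \<and> p < q \<and> q \<le> y \<and> matrix_unit a b p q \<noteq> 0}" for x y
    by (rule finite_subset[of _ "{(a, b)}"]) (auto simp: matrix_unit_def)
  moreover from \<open>a \<le> b\<close> have "\<forall>x y. \<not> x \<le> y \<longrightarrow> matrix_unit a b x y = 0"
    by (auto simp: matrix_unit_def)
  ultimately show ?thesis unfolding FI_def by blast
qed

lemma triangular_matrix_unit: "a \<le> b \<Longrightarrow> triangular (matrix_unit a b)"
  by (simp add: matrix_unit_def triangular_def)

lemma matrix_unit_neq_zero: "matrix_unit a b \<noteq> fi_zero"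
  by (metis fi_zero_def matrix_unit_def one_neq_zero)

lemma fi_mult_matrix_unit:
  assumes "a \<le> b" "triangular g"
  shows "fi_mult (matrix_unit a b) g = (\<lambda>u v. if u = a then g b v else 0)"
proof (intro ext)
  fix u v
  have "fi_mult (matrix_unit a b) g u v = (\<Sum>z\<in>{b}. matrix_unit a b u z * g z v)"
    using assms
    by (intro fi_mult_eq_sum) (auto simp: matrix_unit_def triangular_def split: if_splits)
  then show "fi_mult (matrix_unit a b) g u v = (if u = a then g b v else 0)"
    by (simp add: matrix_unit_def)
qed

lemma fi_comm_matrix_units:
  assumes "a \<le> c" "c \<le> b" "a \<noteq> b"
  shows "fi_comm (matrix_unit a c) (matrix_unit c b) = matrix_unit a b"
  using assms
  by (simp add: fi_comm_def fi_mult_matrix_unit triangular_matrix_unit)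
    (auto simp: matrix_unit_def intro!: ext)

lemma matrix_unit_in_lie_der:
  "has_chain (2 ^ k) a b \<Longrightarrow> (matrix_unit a b :: 'a::order \<Rightarrow> 'a \<Rightarrow> 'k::field) \<in> lie_der (Suc k)"
proof (induction k arbitrary: a b)
  case 0
  then have "a < b" by (rule has_chain_pow2_imp_less)
  then have "fi_comm (matrix_unit a a) (matrix_unit a b) \<in> lie_br FI FI"
    by (intro fi_comm_in_lie_br matrix_unit_FI) auto
  with \<open>a < b\<close> show ?case
    by (simp add: fi_comm_matrix_units)
next
  case (Suc k)
  then obtain c where c: "has_chain (2 ^ k) a c" "has_chain (2 ^ k) c b"
    by (auto simp: mult_2 elim: has_chain_add_split)
  then have "a < c" "c < b"
    by (auto intro: has_chain_pow2_imp_less)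
  moreover from Suc.IH c have
    "fi_comm (matrix_unit a c) (matrix_unit c b :: 'a \<Rightarrow> 'a \<Rightarrow> 'k)
      \<in> lie_br (lie_der (Suc k)) (lie_der (Suc k))"
    by (blast intro: fi_comm_in_lie_br)
  ultimately show ?case
    by (simp add: fi_comm_matrix_units)
qed

lemma FI_neq_zero: "FI \<noteq> {fi_zero}"
  using FI_fi_one fi_one_neq_zero by blast

lemma eq_zero_iff_poset_length_less:
  fixes D :: "('a::order \<Rightarrow> 'a \<Rightarrow> 'k::field) set"
  assumes "fi_zero \<in> D" "D \<subseteq> chain_ideal k"
    and "\<And>x y. has_chain k x y \<Longrightarrow> matrix_unit x y \<in> D"
  shows "D = {fi_zero} \<longleftrightarrow> poset_length TYPE('a) < enat k"
proof
  assume "D = {fi_zero}"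
  with assms(3) matrix_unit_neq_zero show "poset_length TYPE('a) < enat k"
    unfolding poset_length_less_iff by blast
next
  assume "poset_length TYPE('a) < enat k"
  then have "(chain_ideal k :: ('a \<Rightarrow> 'a \<Rightarrow> 'k) set) = {fi_zero}"
    by (simp add: poset_length_less_iff chain_ideal_trivial)
  with assms(1,2) show "D = {fi_zero}" by blast
qed

lemma lie_der_Suc_eq_zero_iff:
  "(lie_der (Suc n) :: ('a::order \<Rightarrow> 'a \<Rightarrow> 'k::field) set) = {fi_zero}
    \<longleftrightarrow> poset_length TYPE('a) < enat (2 ^ n)"
  by (rule eq_zero_iff_poset_length_less[OF _ lie_der_Suc_subset matrix_unit_in_lie_der])
    (simp add: lie_br_def fspan.zero)

lemma strong_lie_der_Suc_eq_zero_iff: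
  "(strong_lie_der (Suc n) :: ('a::order \<Rightarrow> 'a \<Rightarrow> 'k::field) set) = {fi_zero}
    \<longleftrightarrow> poset_length TYPE('a) < enat (2 ^ n)"
  by (rule eq_zero_iff_poset_length_less[OF _ strong_lie_der_Suc_subset])
    (simp add: prod_sp_def fspan.zero,
      use lie_der_subset_strong_lie_der matrix_unit_in_lie_der in blast)

lemma dl_Lie_eq:
  "poset_length TYPE('a::order) = enat m \<Longrightarrow>
    dl_Lie TYPE('a \<Rightarrow> 'a \<Rightarrow> 'k::field) = Suc (ceillog2 (Suc m))"
  unfolding dl_Lie_def
  by (rule Least_eq_Suc_ceillog2)
    (simp add: FI_neq_zero, unfold lie_der_Suc_eq_zero_iff, simp)

lemma dl_strong_Lie_eq:
  "poset_length TYPE('a::order) = enat m \<Longrightarrow>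
    dl_strong_Lie TYPE('a \<Rightarrow> 'a \<Rightarrow> 'k::field) = Suc (ceillog2 (Suc m))"
  unfolding dl_strong_Lie_def
  by (rule Least_eq_Suc_ceillog2)
    (simp add: FI_neq_zero, unfold strong_lie_der_Suc_eq_zero_iff, simp)

lemma FI_lie_solvable_imp_poset_length_finite:
  assumes "FI_lie_solvable TYPE('a::order \<Rightarrow> 'a \<Rightarrow> 'k::field)"
  obtains m where "poset_length TYPE('a) = enat m"
proof -
  obtain n where n: "(lie_der n :: ('a \<Rightarrow> 'a \<Rightarrow> 'k) set) = {fi_zero}"
    using assms unfolding FI_lie_solvable_def by blast
  with FI_neq_zero obtain n' where "n = Suc n'" by (cases n) auto
  with n have "poset_length TYPE('a) < enat (2 ^ n')"
    using lie_der_Suc_eq_zero_iff by blast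
  with that show ?thesis by (auto elim: less_enatE)
qed

section \<open>The derived series of the unit group\<close>

definition chain_unipotent :: "nat \<Rightarrow> ('a::order \<Rightarrow> 'a \<Rightarrow> 'k::field) \<Rightarrow> bool" where
  "chain_unipotent j h \<longleftrightarrow> (\<forall>a. h a a = 1) \<and> (\<forall>a b. a \<noteq> b \<longrightarrow> \<not> has_chain j a b \<longrightarrow> h a b = 0)"

definition chain_units :: "nat \<Rightarrow> ('a::order \<Rightarrow> 'a \<Rightarrow> 'k::field) set" where
  "chain_units j = {h \<in> carrier FI_units. chain_unipotent j h}"

lemma chain_unipotent_off_diag:
  "chain_unipotent j h \<Longrightarrow> a \<noteq> b \<Longrightarrow> h a b \<noteq> 0 \<Longrightarrow> has_chain j a b"
  unfolding chain_unipotent_def by blast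

lemma chain_unipotent_imp_triangular: "chain_unipotent j h \<Longrightarrow> triangular h"
  unfolding chain_unipotent_def triangular_def by (metis has_chain_imp_le order.refl)

text \<open>If the entry at \<open>(a, b)\<close> of \<open>c\<close> were nonzero with no \<open>j\<close>-chain from \<open>a\<close> to \<open>b\<close>, then for
  a minimal such \<open>b\<close> the entry at \<open>(a, b)\<close> of \<open>c w\<close> would be \<open>w a b + c a b * w b b \<noteq> w' a b\<close>.\<close>

lemma chain_unipotent_left_factor:
  assumes c: "c \<in> FI" and w: "triangular w" "\<And>a. w a a \<noteq> 0"
    and w'_diag: "\<And>a. w' a a = w a a"
    and w'_off: "\<And>a b. a \<noteq> b \<Longrightarrow> \<not> has_chain j a b \<Longrightarrow> w' a b = w a b"
    and eq: "fi_mult c w = w'"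
  shows "chain_unipotent j c"
proof -
  have tc: "triangular c" using c by (rule FI_imp_triangular)
  have diag: "c a a = 1" for a
    using fi_mult_diag[OF tc w(1), of a] eq w'_diag w(2)[of a] by simp
  have off: "c a b = 0" if "a \<noteq> b" "\<not> has_chain j a b" for a b
  proof (rule ccontr)
    assume "c a b \<noteq> 0"
    with tc that have "a < b" by (auto simp: triangular_def order.strict_iff_order)
    define B where "B = {z. a < z \<and> z \<le> b \<and> c a z \<noteq> 0 \<and> \<not> has_chain j a z}"
    have "finite B"
      using FI_finite_row[OF c, of a b] by (rule rev_finite_subset) (auto simp: B_def)
    moreover have "b \<in> B"
      unfolding B_def using \<open>a < b\<close> \<open>c a b \<noteq> 0\<close> that by auto
    ultimately obtain z0 where "z0 \<in> B" and z0_min: "\<And>z. z \<in> B \<Longrightarrow> z \<le> z0 \<Longrightarrow> z = z0"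
      using finite_has_minimal[of B] by blast
    then have z0: "a < z0" "c a z0 \<noteq> 0" "\<not> has_chain j a z0" by (auto simp: B_def)
    have "fi_mult c w a z0 = (\<Sum>z\<in>{a, z0}. c a z * w z z0)"
    proof (rule fi_mult_eq_sum[OF tc w(1)])
      fix z
      assume z: "a \<le> z" "z \<le> z0" "c a z * w z z0 \<noteq> 0"
      show "z \<in> {a, z0}"
      proof (rule ccontr)
        assume "z \<notin> {a, z0}"
        with z \<open>z0 \<in> B\<close> have "has_chain j a z \<or> z \<in> B"
          by (auto simp: B_def order.order_iff_strict intro: order.trans)
        with z(2) z0(3) z0_min \<open>z \<notin> {a, z0}\<close> show False
          using has_chain_upper_mono by blast
      qed
    qed simp
    also have "\<dots> = w a z0 + c a z0 * w z0 z0"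
      using z0 diag by simp
    finally have "c a z0 * w z0 z0 = 0"
      using eq w'_off[of a z0] z0 by simp
    with z0(2) w(2) show False by simp
  qed
  show ?thesis
    unfolding chain_unipotent_def using diag off by blast
qed

lemma chain_unipotent_fi_mult:
  assumes "chain_unipotent j f" "chain_unipotent j g"
  shows "chain_unipotent j (fi_mult f g)"
proof -
  have tri: "triangular f" "triangular g"
    using assms by (auto intro: chain_unipotent_imp_triangular)
  have "fi_mult f g a b = 0" if "a \<noteq> b" "\<not> has_chain j a b" for a b
  proof (rule ccontr)
    assume "fi_mult f g a b \<noteq> 0"
    then obtain z where z: "z \<le> b" "f a z \<noteq> 0" "g z b \<noteq> 0"
      by (rule fi_mult_nonzeroE)
    with assms that show False
      unfolding chain_unipotent_def by (metis has_chain_upper_mono)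
  qed
  with assms tri show ?thesis
    by (simp add: chain_unipotent_def fi_mult_diag)
qed

lemma subgroup_chain_units: "subgroup (chain_units j) FI_units"
proof (rule FI_units.subgroupI)
  show "chain_units j \<subseteq> carrier FI_units"
    by (auto simp: chain_units_def)
  show "chain_units j \<noteq> {}"
    using FI_units.one_closed
    by (auto simp: chain_units_def chain_unipotent_def fi_one_def)
  show "h \<otimes>\<^bsub>FI_units\<^esub> g \<in> chain_units j" if "h \<in> chain_units j" "g \<in> chain_units j" for h g
    using that FI_units.m_closed[of h g] by (auto simp: chain_units_def chain_unipotent_fi_mult)
  show "inv\<^bsub>FI_units\<^esub> h \<in> chain_units j" if h: "h \<in> chain_units j" for h
  proof -
    from h have hc: "h \<in> carrier FI_units" and hu: "chain_unipotent j h"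
      by (auto simp: chain_units_def)
    have "chain_unipotent j (inv\<^bsub>FI_units\<^esub> h)"
    proof (rule chain_unipotent_left_factor)
      show "inv\<^bsub>FI_units\<^esub> h \<in> FI"
        using hc by (simp add: FI_units_FI)
      show "triangular h"
        using hu by (rule chain_unipotent_imp_triangular)
      show "fi_mult (inv\<^bsub>FI_units\<^esub> h) h = fi_one"
        using FI_units.l_inv[OF hc] by simp
    qed (use hu in \<open>auto simp: chain_unipotent_def fi_one_def\<close>)
    with \<open>h \<in> carrier FI_units\<close> show ?thesis
      by (simp add: chain_units_def)
  qed
qed

abbreviation units_commutator ::
  "('a::order \<Rightarrow> 'a \<Rightarrow> 'k::field) \<Rightarrow> ('a \<Rightarrow> 'a \<Rightarrow> 'k) \<Rightarrow> ('a \<Rightarrow> 'a \<Rightarrow> 'k)" where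
  "units_commutator x y \<equiv>
    x \<otimes>\<^bsub>FI_units\<^esub> y \<otimes>\<^bsub>FI_units\<^esub> inv\<^bsub>FI_units\<^esub> x \<otimes>\<^bsub>FI_units\<^esub> inv\<^bsub>FI_units\<^esub> y"

lemma (in group) commutator_mult_swap:
  assumes "x \<in> carrier G" "y \<in> carrier G"
  shows "(x \<otimes> y \<otimes> inv x \<otimes> inv y) \<otimes> (y \<otimes> x) = x \<otimes> y"
proof -
  have "inv y \<otimes> (y \<otimes> x) = x"
    using assms by (simp add: m_assoc[symmetric])
  with assms show ?thesis by (simp add: m_assoc)
qed

lemma (in group) commutator_eqI:
  assumes "x \<in> carrier G" "y \<in> carrier G" "e \<in> carrier G" "x \<otimes> y = e \<otimes> (y \<otimes> x)"
  shows "x \<otimes> y \<otimes> inv x \<otimes> inv y = e"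
  using commutator_mult_swap[OF assms(1,2)] assms by (metis m_closed inv_closed right_cancel)

lemma commutator_in_derived:
  "h1 \<in> H \<Longrightarrow> h2 \<in> H \<Longrightarrow> h1 \<otimes>\<^bsub>G\<^esub> h2 \<otimes>\<^bsub>G\<^esub> inv\<^bsub>G\<^esub> h1 \<otimes>\<^bsub>G\<^esub> inv\<^bsub>G\<^esub> h2 \<in> derived G H"
  unfolding derived_def by (rule generate.incl) blast

lemma commutator_in_chain_units:
  assumes h: "h1 \<in> carrier FI_units" "h2 \<in> carrier FI_units"
    and commute: "\<And>a b. a \<noteq> b \<Longrightarrow> \<not> has_chain j a b \<Longrightarrow> fi_mult h1 h2 a b = fi_mult h2 h1 a b"
  shows "units_commutator h1 h2 \<in> chain_units j"
    (is "?c \<in> _")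
proof -
  have "?c \<in> carrier FI_units" using h by (simp del: FI_units_mult)
  moreover have "chain_unipotent j ?c"
  proof (rule chain_unipotent_left_factor)
    show "?c \<in> FI"
      using \<open>?c \<in> carrier FI_units\<close> by (rule FI_units_FI)
    show "fi_mult h2 h1 a a \<noteq> 0" for a
      using h FI_units.m_closed[of h2 h1] by (simp add: FI_units_diag_nonzero)
    show "fi_mult h1 h2 a a = fi_mult h2 h1 a a" for a
      using h by (simp add: FI_units_triangular fi_mult_diag mult.commute)
    show "fi_mult ?c (fi_mult h2 h1) = fi_mult h1 h2"
      using FI_units.commutator_mult_swap[OF h] by simp
  qed (use commute triangular_fi_mult in auto)
  ultimately show ?thesis by (simp add: chain_units_def)
qed

lemma derived_carrier_subset_chain_units:
  "derived (FI_units :: ('a::order \<Rightarrow> 'a \<Rightarrow> 'k::field) monoid) (carrier FI_units) \<subseteq> chain_units 1"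
  unfolding derived_def
proof (rule FI_units.generate_subgroup_incl[OF _ subgroup_chain_units], clarify)
  fix h1 h2 :: "'a \<Rightarrow> 'a \<Rightarrow> 'k"
  assume h: "h1 \<in> carrier FI_units" "h2 \<in> carrier FI_units"
  show "units_commutator h1 h2 \<in> chain_units 1"
  proof (rule commutator_in_chain_units[OF h])
    fix a b :: 'a
    assume "a \<noteq> b" "\<not> has_chain 1 a b"
    then have "\<not> a \<le> b" by (simp only: has_chain_1 order.strict_iff_order) blast
    then show "fi_mult h1 h2 a b = fi_mult h2 h1 a b" by (simp add: fi_mult_def)
  qed
qed

lemma fi_mult_chain_unipotent_off_diag:
  assumes f: "chain_unipotent k f" and g: "chain_unipotent k g"
    and ab: "a \<noteq> b" "\<not> has_chain (k + k) a b"
  shows "fi_mult f g a b = f a b + g a b"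
proof -
  have "fi_mult f g a b = (\<Sum>z\<in>{a, b}. f a z * g z b)"
  proof (rule fi_mult_eq_sum)
    show "triangular f" "triangular g"
      using f g by (auto intro: chain_unipotent_imp_triangular)
    fix z
    assume z: "a \<le> z" "z \<le> b" "f a z * g z b \<noteq> 0"
    show "z \<in> {a, b}"
    proof (rule ccontr)
      assume "z \<notin> {a, b}"
      with z have "has_chain k a z" "has_chain k z b"
        using chain_unipotent_off_diag[OF f, of a z] chain_unipotent_off_diag[OF g, of z b] by auto
      with ab(2) show False by (blast intro: has_chain_add)
    qed
  qed simp
  with f g ab(1) show ?thesis by (simp add: chain_unipotent_def)
qed

lemma derived_chain_units_subset:
  assumes "H \<subseteq> chain_units k"
  shows "derived FI_units H \<subseteq> chain_units (k + k)"
  unfolding derived_def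
proof (rule FI_units.generate_subgroup_incl[OF _ subgroup_chain_units], clarify)
  fix h1 h2
  assume "h1 \<in> H" "h2 \<in> H"
  with assms have "h1 \<in> carrier FI_units" "h2 \<in> carrier FI_units"
    and "chain_unipotent k h1" "chain_unipotent k h2"
    by (auto simp: chain_units_def)
  then show "units_commutator h1 h2 \<in> chain_units (k + k)"
    by (intro commutator_in_chain_units) (simp_all add: fi_mult_chain_unipotent_off_diag)
qed

lemma derived_Suc_subset_chain_units:
  "(derived FI_units ^^ Suc n) (carrier FI_units) \<subseteq> chain_units (2 ^ n)"
proof (induction n)
  case 0
  show ?case using derived_carrier_subset_chain_units by simp
next
  case (Suc n)
  then show ?case using derived_chain_units_subset by (simp add: mult_2)
qed

lemma chain_units_trivial:
  assumes "\<And>a b::'a. \<not> has_chain k a b"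
  shows "(chain_units k :: ('a::order \<Rightarrow> 'a \<Rightarrow> 'k::field) set) = {fi_one}"
proof -
  have "h = fi_one" if "h \<in> chain_units k" for h :: "'a \<Rightarrow> 'a \<Rightarrow> 'k"
    using that assms by (auto simp: chain_units_def chain_unipotent_def fi_one_def intro!: ext)
  moreover have "fi_one \<in> (chain_units k :: ('a \<Rightarrow> 'a \<Rightarrow> 'k) set)"
    using subgroup.one_closed[OF subgroup_chain_units] by simp
  ultimately show ?thesis by blast
qed

definition dilation :: "'a::order \<Rightarrow> 'k::field \<Rightarrow> 'a \<Rightarrow> 'a \<Rightarrow> 'k" where
  "dilation a t = (\<lambda>u v. if u = v then if u = a then t else 1 else 0)"

definition transvection :: "'a::order \<Rightarrow> 'a \<Rightarrow> 'k::field \<Rightarrow> 'a \<Rightarrow> 'a \<Rightarrow> 'k" where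
  "transvection a b s = (\<lambda>u v. if u = v then 1 else if u = a \<and> v = b then s else 0)"

lemma dilation_FI: "dilation a t \<in> FI"
proof -
  have "{(p, q). x \<le> p \<and> p < q \<and> q \<le> y \<and> dilation a t p q \<noteq> 0} = {}" for x y
    by (auto simp: dilation_def)
  then show ?thesis unfolding FI_def by (auto simp: dilation_def)
qed

lemma transvection_FI: "a \<le> b \<Longrightarrow> transvection a b s \<in> FI"
proof -
  assume "a \<le> b"
  moreover have "finite {(p, q). x \<le> p \<and> p < q \<and> q \<le> y \<and> transvection a b s p q \<noteq> 0}" for x y
    by (rule finite_subset[of _ "{(a, b)}"]) (auto simp: transvection_def)
  moreover from \<open>a \<le> b\<close> have "\<forall>x y. \<not> x \<le> y \<longrightarrow> transvection a b s x y = 0"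
    by (auto simp: transvection_def)
  ultimately show ?thesis unfolding FI_def by blast
qed

lemma triangular_dilation: "triangular (dilation a t)"
  by (simp add: dilation_FI FI_imp_triangular)

lemma triangular_transvection: "a \<le> b \<Longrightarrow> triangular (transvection a b s)"
  by (simp add: transvection_FI FI_imp_triangular)

lemma fi_mult_dilation_left:
  assumes "triangular g"
  shows "fi_mult (dilation a t) g = (\<lambda>u v. (if u = a then t else 1) * g u v)"
proof (intro ext)
  fix u v
  have "fi_mult (dilation a t) g u v = (\<Sum>z\<in>{u}. dilation a t u z * g z v)"
    by (rule fi_mult_eq_sum[OF triangular_dilation assms])
      (auto simp: dilation_def split: if_splits)
  then show "fi_mult (dilation a t) g u v = (if u = a then t else 1) * g u v"
    by (simp add: dilation_def)
qed

lemma fi_mult_dilation_right: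
  assumes "triangular g"
  shows "fi_mult g (dilation a t) = (\<lambda>u v. g u v * (if v = a then t else 1))"
proof (intro ext)
  fix u v
  have "fi_mult g (dilation a t) u v = (\<Sum>z\<in>{v}. g u z * dilation a t z v)"
    by (rule fi_mult_eq_sum[OF assms triangular_dilation])
      (auto simp: dilation_def split: if_splits)
  then show "fi_mult g (dilation a t) u v = g u v * (if v = a then t else 1)"
    by (simp add: dilation_def)
qed

lemma fi_mult_transvection_left:
  assumes "a < b" "triangular g"
  shows "fi_mult (transvection a b s) g = (\<lambda>u v. g u v + (if u = a then s * g b v else 0))"
proof (intro ext)
  fix u v
  have "fi_mult (transvection a b s) g u v = (\<Sum>z\<in>{u, b}. transvection a b s u z * g z v)"
    by (rule fi_mult_eq_sum[OF triangular_transvection assms(2)])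
      (use assms(1) in \<open>auto simp: transvection_def split: if_splits\<close>)
  also have "\<dots> = g u v + (if u = a then s * g b v else 0)"
    using assms(1) by (cases "u = b") (auto simp: transvection_def)
  finally show "fi_mult (transvection a b s) g u v = g u v + (if u = a then s * g b v else 0)" .
qed

lemma dilation_unit:
  assumes "t \<noteq> 0"
  shows "dilation a t \<in> carrier FI_units"
  unfolding FI_units_carrier
proof (intro conjI bexI[of _ "dilation a (1 / t)"] dilation_FI)
  show "fi_mult (dilation a (1 / t)) (dilation a t) = fi_one"
    "fi_mult (dilation a t) (dilation a (1 / t)) = fi_one"
    unfolding fi_mult_dilation_left[OF triangular_dilation]
    using assms by (auto simp: dilation_def fi_one_def intro!: ext)
qed

lemma transvection_unit:
  assumes "a < b"
  shows "transvection a b s \<in> carrier FI_units"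
  unfolding FI_units_carrier
proof (intro conjI bexI[of _ "transvection a b (- s)"] transvection_FI less_imp_le[OF assms])
  have tri: "triangular (transvection a b s)" "triangular (transvection a b (- s))"
    using assms by (simp_all add: triangular_transvection less_imp_le)
  show "fi_mult (transvection a b (- s)) (transvection a b s) = fi_one"
    "fi_mult (transvection a b s) (transvection a b (- s)) = fi_one"
    unfolding fi_mult_transvection_left[OF assms tri(1)] fi_mult_transvection_left[OF assms tri(2)]
    using assms by (auto simp: transvection_def fi_one_def intro!: ext)
qed

lemma dilation_transvection_relation:
  assumes "a < b"
  shows "fi_mult (dilation a t) (transvection a b s)
    = fi_mult (transvection a b ((t - 1) * s)) (fi_mult (transvection a b s) (dilation a t))"
proof -
  have tri: "triangular (transvection a b s)"
    using assms by (simp add: triangular_transvection less_imp_le)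
  with assms show ?thesis
    unfolding fi_mult_transvection_left[OF assms triangular_fi_mult]
    unfolding fi_mult_dilation_left[OF tri] fi_mult_dilation_right[OF tri]
    by (auto simp: transvection_def algebra_simps intro!: ext)
qed

lemma transvection_relation:
  assumes "a < c" "c < b"
  shows "fi_mult (transvection a c s) (transvection c b 1)
    = fi_mult (transvection a b s) (fi_mult (transvection c b 1) (transvection a c s))"
proof -
  have "a < b" using assms by (rule order.strict_trans)
  have tri: "triangular (transvection c b 1)" "triangular (transvection a c s)"
    using assms by (simp_all add: triangular_transvection less_imp_le)
  with assms \<open>a < b\<close> show ?thesis
    unfolding fi_mult_transvection_left[OF \<open>a < b\<close> triangular_fi_mult]
    unfolding fi_mult_transvection_left[OF assms(1) tri(1)]
      fi_mult_transvection_left[OF assms(2) tri(2)]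
    by (auto simp: transvection_def intro!: ext)
qed

lemma transvection_in_derived:
  fixes t :: "'k::field"
  assumes t: "t \<noteq> 0" "t \<noteq> 1"
  shows "has_chain (2 ^ k) a b
    \<Longrightarrow> (transvection a b s :: 'a::order \<Rightarrow> 'a \<Rightarrow> 'k) \<in> (derived FI_units ^^ Suc k) (carrier FI_units)"
proof (induction k arbitrary: a b s)
  case 0
  then have "a < b" by (rule has_chain_pow2_imp_less)
  let ?s = "s / (t - 1)"
  have "units_commutator (dilation a t) (transvection a b ?s) = transvection a b s"
    using \<open>a < b\<close> t dilation_transvection_relation[OF \<open>a < b\<close>, of t ?s]
    by (intro FI_units.commutator_eqI) (simp_all add: dilation_unit transvection_unit)
  moreover have
    "units_commutator (dilation a t) (transvection a b ?s) \<in> derived FI_units (carrier FI_units)"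
    using \<open>a < b\<close> t by (intro commutator_in_derived dilation_unit transvection_unit)
  ultimately show ?case by simp
next
  case (Suc k)
  then obtain c where c: "has_chain (2 ^ k) a c" "has_chain (2 ^ k) c b"
    by (auto simp: mult_2 elim: has_chain_add_split)
  then have "a < c" "c < b"
    by (auto intro: has_chain_pow2_imp_less)
  then have "units_commutator (transvection a c s) (transvection c b 1) = transvection a b s"
    using transvection_relation
    by (intro FI_units.commutator_eqI) (simp_all add: transvection_unit order.strict_trans)
  moreover have "units_commutator (transvection a c s) (transvection c b 1)
      \<in> derived FI_units
          ((derived FI_units ^^ Suc k) (carrier (FI_units :: ('a \<Rightarrow> 'a \<Rightarrow> 'k) monoid)))"
    using Suc.IH c by (intro commutator_in_derived)
  ultimately show ?case by simp
qed

lemma derived_Suc_eq_one_iff: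
  assumes "\<exists>t::'k. t \<noteq> 0 \<and> t \<noteq> 1"
  shows "(derived (FI_units :: ('a::order \<Rightarrow> 'a \<Rightarrow> 'k::field) monoid) ^^ Suc n) (carrier FI_units)
      = {fi_one} \<longleftrightarrow> poset_length TYPE('a) < enat (2 ^ n)"
proof
  assume one: "(derived (FI_units :: ('a \<Rightarrow> 'a \<Rightarrow> 'k) monoid) ^^ Suc n) (carrier FI_units) = {fi_one}"
  show "poset_length TYPE('a) < enat (2 ^ n)"
    unfolding poset_length_less_iff
  proof (intro allI notI)
    fix x y :: 'a
    assume chain: "has_chain (2 ^ n) x y"
    then have "x < y" by (rule has_chain_pow2_imp_less)
    then have "(transvection x y 1 :: 'a \<Rightarrow> 'a \<Rightarrow> 'k) \<noteq> fi_one"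
      by (metis fi_one_def transvection_def less_irrefl zero_neq_one)
    moreover from assms chain have
      "(transvection x y 1 :: 'a \<Rightarrow> 'a \<Rightarrow> 'k) \<in> (derived FI_units ^^ Suc n) (carrier FI_units)"
      using transvection_in_derived by blast
    ultimately show False using one by blast
  qed
next
  assume "poset_length TYPE('a) < enat (2 ^ n)"
  then have "(chain_units (2 ^ n) :: ('a \<Rightarrow> 'a \<Rightarrow> 'k) set) = {fi_one}"
    by (simp add: poset_length_less_iff chain_units_trivial)
  moreover have "fi_one \<in> (derived (FI_units :: ('a \<Rightarrow> 'a \<Rightarrow> 'k) monoid) ^^ Suc n) (carrier FI_units)"
    unfolding FI_units_one[symmetric]
    by (rule subgroup.one_closed[OF FI_units.exp_of_derived_is_subgroup[OF FI_units.subgroup_self]])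
  ultimately show
    "(derived (FI_units :: ('a \<Rightarrow> 'a \<Rightarrow> 'k) monoid) ^^ Suc n) (carrier FI_units) = {fi_one}"
    using derived_Suc_subset_chain_units by blast
qed

lemma FI_units_nontrivial:
  assumes "\<exists>t::'k. t \<noteq> 0 \<and> t \<noteq> 1"
  shows "carrier (FI_units :: ('a::order \<Rightarrow> 'a \<Rightarrow> 'k::field) monoid) \<noteq> {fi_one}"
proof -
  from assms obtain t :: 'k where "t \<noteq> 0" "t \<noteq> 1" by blast
  have "(dilation undefined t :: 'a \<Rightarrow> 'a \<Rightarrow> 'k) \<in> carrier FI_units"
    using \<open>t \<noteq> 0\<close> by (rule dilation_unit)
  moreover from \<open>t \<noteq> 1\<close> have "(dilation undefined t :: 'a \<Rightarrow> 'a \<Rightarrow> 'k) \<noteq> fi_one"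
    by (auto simp: dilation_def fi_one_def fun_eq_iff)
  ultimately show ?thesis by blast
qed

lemma derived_length_FI_units_eq:
  assumes "\<exists>t::'k. t \<noteq> 0 \<and> t \<noteq> 1" and "poset_length TYPE('a::order) = enat m"
  shows "derived_length (FI_units :: ('a \<Rightarrow> 'a \<Rightarrow> 'k::field) monoid) = Suc (ceillog2 (Suc m))"
  unfolding derived_length_def FI_units_one
  by (rule Least_eq_Suc_ceillog2)
    (use FI_units_nontrivial[OF assms(1)] in simp,
      unfold derived_Suc_eq_one_iff[OF assms(1)], simp add: assms(2))

lemma solvable_FI_units_imp_poset_length_finite:
  assumes "solvable (FI_units :: ('a::order \<Rightarrow> 'a \<Rightarrow> 'k::field) monoid)"
    and "\<exists>t::'k. t \<noteq> 0 \<and> t \<noteq> 1"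
  obtains m where "poset_length TYPE('a) = enat m"
proof -
  obtain n
    where n: "(derived (FI_units :: ('a \<Rightarrow> 'a \<Rightarrow> 'k) monoid) ^^ n) (carrier FI_units) = {fi_one}"
    using assms(1) FI_units.solvable_iff_trivial_derived_seq by auto
  with FI_units_nontrivial[OF assms(2)] obtain n' where "n = Suc n'" by (cases n) auto
  with n have "poset_length TYPE('a) < enat (2 ^ n')"
    using derived_Suc_eq_one_iff[OF assms(2)] by blast
  with that show ?thesis by (auto elim: less_enatE)
qed

lemma field_card_neq_2_imp:
  assumes "card (UNIV :: 'k::field set) \<noteq> 2"
  shows "\<exists>t::'k. t \<noteq> 0 \<and> t \<noteq> 1"
proof (rule ccontr)
  assume "\<not> (\<exists>t::'k. t \<noteq> 0 \<and> t \<noteq> 1)"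
  then have "(UNIV :: 'k set) = {0, 1}" by auto
  moreover have "card {0 :: 'k, 1} = 2" by simp
  ultimately show False using assms by metis
qed

theorem corollary1p5:
  shows "(FI_lie_solvable TYPE('a::order \<Rightarrow> 'a \<Rightarrow> 'k) \<longrightarrow>
            (\<exists>m::nat. poset_length TYPE('a) = enat m \<and>
               int (dl_Lie TYPE('a \<Rightarrow> 'a \<Rightarrow> 'k)) = \<lceil>log 2 (real m + 1)\<rceil> + 1 \<and>
               int (dl_strong_Lie TYPE('a \<Rightarrow> 'a \<Rightarrow> 'k)) = \<lceil>log 2 (real m + 1)\<rceil> + 1))
       \<and> (solvable (FI_units :: ('a \<Rightarrow> 'a \<Rightarrow> 'k) monoid) \<and> card (UNIV :: 'k::field set) \<noteq> 2 \<longrightarrow>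
            (\<exists>m::nat. poset_length TYPE('a) = enat m \<and>
               int (derived_length (FI_units :: ('a \<Rightarrow> 'a \<Rightarrow> 'k) monoid)) = \<lceil>log 2 (real m + 1)\<rceil> + 1))"
proof (intro conjI impI)
  assume "FI_lie_solvable TYPE('a \<Rightarrow> 'a \<Rightarrow> 'k)"
  then obtain m where m: "poset_length TYPE('a) = enat m"
    by (rule FI_lie_solvable_imp_poset_length_finite)
  show "\<exists>m. poset_length TYPE('a) = enat m \<and>
      int (dl_Lie TYPE('a \<Rightarrow> 'a \<Rightarrow> 'k)) = \<lceil>log 2 (real m + 1)\<rceil> + 1 \<and>
      int (dl_strong_Lie TYPE('a \<Rightarrow> 'a \<Rightarrow> 'k)) = \<lceil>log 2 (real m + 1)\<rceil> + 1"
    using m dl_Lie_eq[where 'k = 'k, OF m] dl_strong_Lie_eq[where 'k = 'k, OF m]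
    by (simp add: ceiling_log2_Suc)
next
  assume "solvable (FI_units :: ('a \<Rightarrow> 'a \<Rightarrow> 'k) monoid) \<and> card (UNIV :: 'k set) \<noteq> 2"
  then have solvable: "solvable (FI_units :: ('a \<Rightarrow> 'a \<Rightarrow> 'k) monoid)"
    and t: "\<exists>t::'k. t \<noteq> 0 \<and> t \<noteq> 1"
    by (auto intro: field_card_neq_2_imp)
  then obtain m where m: "poset_length TYPE('a) = enat m"
    by (rule solvable_FI_units_imp_poset_length_finite)
  show "\<exists>m. poset_length TYPE('a) = enat m \<and>
      int (derived_length (FI_units :: ('a \<Rightarrow> 'a \<Rightarrow> 'k) monoid)) = \<lceil>log 2 (real m + 1)\<rceil> + 1"
    using m derived_length_FI_units_eq[OF t m] by (simp add: ceiling_log2_Suc)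
qed

end
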